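(* Let $k$ and $m_1,\ldots,m_n$ be positive integers, let $\tau=1^{m_1}\text{-}1^{m_2}\text{-}\cdots\text{-}1^{m_n}$, and let $A$ be the set of $k$-ary words (words on $\{1,\ldots,k\}$, including the empty word) avoiding $\tau$. Then \[ \sum_{a_1\cdots a_l\in A} x_{a_1}x_{a_2}\cdots x_{a_l} = \Phi\left(\prod_{i=1}^k\Big[e^{tx_i} - T\big\{G_\tau(x_i,u)\big\}\Big]\right), \] where \[ G_\tau(x,u)=\frac{ux^{m_1}(1-x)}{(1-x-u(x-x^{m_1}))(1-x-ux)}\prod_{i=2}^n\left[x^{m_i}+\frac{ux^{m_i}(1-x^{m_i})}{1-x-u(x-x^{m_i})}\right]. \]
   Context: A word $W=s_1\cdots s_l$ contains the vincular pattern $\tau=1^{m_1}\text{-}\cdots\text{-}1^{m_n}$ (with $M=m_1+\cdots+m_n$) if there are indices $1\le i_1<\cdots<i_M\le l$ with $s_{i_1}=\cdots=s_{i_M}$ and $i_{j+1}-i_j=1$ for all $j\notin\{m_1,m_1+m_2,\ldots,m_1+\cdots+m_{n-1}\}$; i.e. $M$ equal letters of which the first $m_1$ are consecutive, the next $m_2$ are consecutive, etc. Otherwise $W$ avoids $\tau$. The polynomials $l_k(t)$ are defined by $\sum_{k\ge0}l_k(t)y^k=e^{ty/(1+y)}$ (so $l_k(t)=(-1)^kL_k^{(-1)}(t)$ with $L_k^{(\alpha)}$ the generalized Laguerre polynomials). $T$ is the linear map sending $u^k\mapsto l_k(t)$, applied coefficientwise to power series in $u$ whose coefficients are power series in the variables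 $x_i$ (expanding $G_\tau(x,u)$ as a power series in $u$ and $x$). $\Phi$ is the linear map with $\Phi(t^j)=j!$ fixing all other variables, applied coefficientwise to power series in the $x_i$ whose coefficients are polynomials in $t$. *)

theory Defs
  imports "HOL-Computational_Algebra.Formal_Power_Series" "HOL-Computational_Algebra.Polynomial"
begin

text \<open>Vincular pattern tau = 1^{m_1}-...-1^{m_n}, given by the list ms = [m_1,...,m_n].
  Literal transcription of the paper's definition (0-based indices): a word W contains tau
  iff there are positions idx 0 < ... < idx (M-1) < length W carrying equal letters such that
  idx (j+1) = idx j + 1 whenever j+1 is not one of m_1, m_1+m_2, ..., m_1+...+m_(n-1).\<close>
definition contains_vinc :: "nat list \<Rightarrow> nat list \<Rightarrow> bool" where
  "contains_vinc ms W \<longleftrightarrow>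
     (let M = sum_list ms;
          B = {sum_list (take r ms) | r. 1 \<le> r \<and> r \<le> length ms - 1}
      in \<exists>idx :: nat \<Rightarrow> nat.
           (\<forall>j. j + 1 < M \<longrightarrow> idx j < idx (j + 1)) \<and>
           (0 < M \<longrightarrow> idx (M - 1) < length W) \<and>
           (\<forall>j<M. W ! (idx j) = W ! (idx 0)) \<and>
           (\<forall>j. j + 1 < M \<and> j + 1 \<notin> B \<longrightarrow> idx (j + 1) = idx j + 1))"

text \<open>G_tau(x,u) as a power series in x (outer) whose coefficients are power series in u (inner).\<close>
definition Gtau :: "nat list \<Rightarrow> real fps fps" where
  "Gtau ms =
     (let X = (fps_X :: real fps fps); U = fps_const (fps_X :: real fps); m1 = hd ms in
       U * X ^ m1 * (1 - X) * inverse (1 - X - U * (X - X ^ m1)) * inverse (1 - X - U * X) *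
       prod_list (map (\<lambda>mi. X ^ mi + U * X ^ mi * (1 - X ^ mi) * inverse (1 - X - U * (X - X ^ mi)))
                      (tl ms)))"

text \<open>l_k(t) = [y^k] e^{t y/(1+y)} = sum_j t^j/j! [y^k] (y/(1+y))^j  (terms j > k vanish).\<close>
definition lpoly :: "nat \<Rightarrow> real poly" where
  "lpoly k = (\<Sum>j\<le>k. monom (fps_nth ((fps_X * inverse (1 + fps_X) :: real fps) ^ j) k / fact j) j)"

text \<open>T : u^r \<mapsto> l_r(t), applied to a power series in u with finitely many nonzero coefficients
  (this is the case for every x-coefficient of G_tau).\<close>
definition Tmap :: "real fps \<Rightarrow> real poly" where
  "Tmap p = (\<Sum>r\<in>{r. fps_nth p r \<noteq> 0}. smult (fps_nth p r) (lpoly r))"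

definition Phi :: "real poly \<Rightarrow> real" where
  "Phi p = (\<Sum>j\<le>degree p. coeff p j * fact j)"

text \<open>Coefficient of x^j in e^{tx} - T{G_tau(x,u)}, a polynomial in t.\<close>
definition factor_coeff :: "nat list \<Rightarrow> nat \<Rightarrow> real poly" where
  "factor_coeff ms j = monom (1 / fact j) j - Tmap (fps_nth (Gtau ms) j)"

end

theory Submission
  imports Defs "HOL-Combinatorics.Multiset_Permutations" "HOL-Library.FuncSet"
begin

text \<open>All letters of an occurrence of tau are equal, so whether a word avoids tau depends, for each
  letter i separately, only on the composition formed by the lengths of the maximal runs of i: the
  blocks m_1, ..., m_n must not fit, in order, into these runs (a greedy test). A word is determined
  by these compositions together with the Smirnov word (no two equal adjacent letters) listing the
  letters of its runs. Hence the number of avoiders is a sum, over tuples of avoiding compositions,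
  of numbers of Smirnov words with prescribed letter counts r_i, and that number equals
  Phi (prod_i l_(r_i)(t)): both sides solve the same triangular system, because the sum of
  l_(length c)(t) over all compositions c of a is t^a/a!. The sum then factors over the letters, and
  it remains to see that G_tau(x,u) is the generating function of the compositions c into which the
  blocks fit, counted by x^(sum c) u^(length c); this follows from a recursion on the list of
  blocks.\<close>

unbundle fps_syntax

section \<open>Occurrences of the pattern and runs of a letter\<close>

definition vinc_gaps :: "nat list \<Rightarrow> nat set" where
  "vinc_gaps ms = {sum_list (take r ms) | r. 1 \<le> r \<and> r \<le> length ms - 1}"

definition vinc_occurrence :: "nat list \<Rightarrow> (nat \<Rightarrow> bool) \<Rightarrow> nat \<Rightarrow> (nat \<Rightarrow> nat) \<Rightarrow> bool" where
  "vinc_occurrence ms P n idx \<longleftrightarrow>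
     (\<forall>j. j + 1 < sum_list ms \<longrightarrow> idx j < idx (j + 1)) \<and>
     (0 < sum_list ms \<longrightarrow> idx (sum_list ms - 1) < n) \<and>
     (\<forall>j<sum_list ms. P (idx j)) \<and>
     (\<forall>j. j + 1 < sum_list ms \<and> j + 1 \<notin> vinc_gaps ms \<longrightarrow> idx (j + 1) = idx j + 1)"

definition contains_vinc_on :: "nat list \<Rightarrow> (nat \<Rightarrow> bool) \<Rightarrow> nat \<Rightarrow> bool" where
  "contains_vinc_on ms P n \<longleftrightarrow> (\<exists>idx. vinc_occurrence ms P n idx)"

lemma contains_vinc_iff_occurrence:
  "contains_vinc ms W \<longleftrightarrow> (\<exists>idx. vinc_occurrence ms (\<lambda>p. W ! p = W ! idx 0) (length W) idx)"
  unfolding contains_vinc_def vinc_occurrence_def vinc_gaps_def Let_def by (rule refl)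

lemma strict_chain_add_le:
  fixes idx :: "nat \<Rightarrow> nat"
  assumes "\<forall>j. j + 1 < M \<longrightarrow> idx j < idx (j + 1)" and "i \<le> j" and "j < M"
  shows "idx i + (j - i) \<le> idx j"
  using assms(2,3)
proof (induction j)
  case (Suc j)
  show ?case
  proof (cases "i = Suc j")
    case False
    then have "idx i + (j - i) \<le> idx j" using Suc by simp
    moreover have "idx j < idx (Suc j)" using assms(1) Suc.prems by simp
    ultimately show ?thesis using Suc.prems False by simp
  qed simp
qed simp

lemma vinc_occurrence_lt:
  assumes "vinc_occurrence ms P n idx" and "j < sum_list ms"
  shows "idx j < n"
proof -
  have "idx j + (sum_list ms - 1 - j) \<le> idx (sum_list ms - 1)"
    using strict_chain_add_le[of "sum_list ms" idx j "sum_list ms - 1"] assms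
    unfolding vinc_occurrence_def by auto
  then show ?thesis using assms unfolding vinc_occurrence_def by auto
qed

lemma contains_vinc_iff_letter:
  assumes "0 < sum_list ms"
  shows "contains_vinc ms W \<longleftrightarrow> (\<exists>i. contains_vinc_on ms (\<lambda>p. W ! p = i) (length W))"
proof
  assume "\<exists>i. contains_vinc_on ms (\<lambda>p. W ! p = i) (length W)"
  then obtain i idx where occ: "vinc_occurrence ms (\<lambda>p. W ! p = i) (length W) idx"
    unfolding contains_vinc_on_def by blast
  moreover have "W ! idx 0 = i" using occ assms unfolding vinc_occurrence_def by simp
  ultimately show "contains_vinc ms W" unfolding contains_vinc_iff_occurrence by blast
qed (auto simp: contains_vinc_iff_occurrence contains_vinc_on_def)

lemma contains_vinc_on_cong:
  assumes "\<And>q. q < n \<Longrightarrow> P q = Q q"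
  shows "contains_vinc_on ms P n = contains_vinc_on ms Q n"
proof -
  have "vinc_occurrence ms P n idx = vinc_occurrence ms Q n idx" for idx
    using vinc_occurrence_lt[of ms _ n idx] assms unfolding vinc_occurrence_def by metis
  then show ?thesis unfolding contains_vinc_on_def by blast
qed

lemma vinc_gaps_Cons: "vinc_gaps (m # ms) = (if ms = [] then {} else insert m ((+) m ` vinc_gaps ms))"
proof (cases "ms = []")
  case True then show ?thesis by (simp add: vinc_gaps_def)
next
  case False
  have "vinc_gaps (m # ms) \<subseteq> insert m ((+) m ` vinc_gaps ms)"
  proof
    fix x assume "x \<in> vinc_gaps (m # ms)"
    then obtain r where r: "1 \<le> r" "r \<le> length ms" "x = sum_list (take r (m # ms))"
      by (auto simp: vinc_gaps_def)
    show "x \<in> insert m ((+) m ` vinc_gaps ms)"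
    proof (cases "r = 1")
      case True then show ?thesis using r by simp
    next
      case False
      then obtain r' where "r = Suc r'" "1 \<le> r'" using r by (cases r) auto
      then have "sum_list (take r' ms) \<in> vinc_gaps ms" using r by (auto simp: vinc_gaps_def)
      then show ?thesis using r \<open>r = Suc r'\<close> by simp
    qed
  qed
  moreover have "insert m ((+) m ` vinc_gaps ms) \<subseteq> vinc_gaps (m # ms)"
  proof
    fix x assume "x \<in> insert m ((+) m ` vinc_gaps ms)"
    then consider "x = m" | r where "1 \<le> r" "r \<le> length ms - 1" "x = m + sum_list (take r ms)"
      by (auto simp: vinc_gaps_def)
    then show "x \<in> vinc_gaps (m # ms)"
    proof cases
      case 1 then show ?thesis using False unfolding vinc_gaps_def
        by (intro CollectI exI[of _ 1]) (auto simp: Suc_le_eq)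
    next
      case (2 r) then show ?thesis unfolding vinc_gaps_def
        by (intro CollectI exI[of _ "Suc r"]) auto
    qed
  qed
  ultimately show ?thesis using False by auto
qed

lemma vinc_gaps_Cons_ge: "x \<in> vinc_gaps (m # ms) \<Longrightarrow> m \<le> x"
  by (auto simp: vinc_gaps_Cons split: if_splits)

lemma contains_vinc_on_Nil: "contains_vinc_on [] P n"
  unfolding contains_vinc_on_def vinc_occurrence_def by simp

lemma vinc_occurrence_Cons_first_block:
  assumes "vinc_occurrence (m # ms) P n idx" and "j < m"
  shows "idx j = idx 0 + j"
  using assms(2)
proof (induction j)
  case (Suc j)
  have "Suc j \<notin> vinc_gaps (m # ms)" using vinc_gaps_Cons_ge[of "Suc j" m ms] Suc.prems by auto
  then show ?case using Suc assms(1) unfolding vinc_occurrence_def by auto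
qed simp

lemma vinc_occurrence_ConsD:
  assumes "0 < m" and occ: "vinc_occurrence (m # ms) P n idx"
  defines "p \<equiv> idx 0"
  shows "p + m \<le> n" and "\<forall>j<m. P (p + j)"
    and "vinc_occurrence ms (\<lambda>q. P (p + m + q)) (n - (p + m)) (\<lambda>q. idx (m + q) - (p + m))"
proof -
  have inc: "\<forall>j. j + 1 < m + sum_list ms \<longrightarrow> idx j < idx (j + 1)"
    and P: "\<And>j. j < m + sum_list ms \<Longrightarrow> P (idx j)"
    and adj: "\<And>j. j + 1 < m + sum_list ms \<Longrightarrow> j + 1 \<notin> vinc_gaps (m # ms) \<Longrightarrow> idx (j + 1) = idx j + 1"
    using occ unfolding vinc_occurrence_def by auto
  have lt: "\<And>j. j < m + sum_list ms \<Longrightarrow> idx j < n"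
    using vinc_occurrence_lt[OF occ] by simp
  have first: "idx j = p + j" if "j < m" for j
    using vinc_occurrence_Cons_first_block[OF occ that] unfolding p_def .
  have last: "idx (m - 1) = p + m - 1" using first[of "m - 1"] assms(1) by simp
  have "idx (m - 1) < n" using lt assms(1) by simp
  then show "p + m \<le> n" using last by simp
  show "\<forall>j<m. P (p + j)" using P first by (metis add_lessD1 less_add_same_cancel1 trans_less_add1)
  have ge: "p + m \<le> idx (m + q)" if "q < sum_list ms" for q
  proof -
    have "idx (m - 1) + (m + q - (m - 1)) \<le> idx (m + q)"
      using strict_chain_add_le[OF inc, of "m - 1" "m + q"] that by simp
    then show ?thesis using last assms(1) by simp
  qed
  show "vinc_occurrence ms (\<lambda>q. P (p + m + q)) (n - (p + m)) (\<lambda>q. idx (m + q) - (p + m))"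
    unfolding vinc_occurrence_def
  proof (intro conjI allI impI)
    fix j assume j: "j + 1 < sum_list ms \<and> j + 1 \<notin> vinc_gaps ms"
    then have "m + j + 1 \<notin> vinc_gaps (m # ms)" by (auto simp: vinc_gaps_Cons)
    then show "idx (m + (j + 1)) - (p + m) = idx (m + j) - (p + m) + 1"
      using adj[of "m + j"] ge[of j] j by simp
  next
    fix j assume "j + 1 < sum_list ms"
    then show "idx (m + j) - (p + m) < idx (m + (j + 1)) - (p + m)"
      using inc[rule_format, of "m + j"] ge[of j] by simp
  next
    assume "0 < sum_list ms"
    then show "idx (m + (sum_list ms - 1)) - (p + m) < n - (p + m)"
      using lt[of "m + (sum_list ms - 1)"] ge[of "sum_list ms - 1"] by simp
  qed (use P ge in simp)
qed

lemma vinc_occurrence_ConsI: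
  assumes "0 < m" and "p + m \<le> n" and "\<forall>j<m. P (p + j)"
    and occ: "vinc_occurrence ms (\<lambda>q. P (p + m + q)) (n - (p + m)) idx"
  shows "vinc_occurrence (m # ms) P n (\<lambda>j. if j < m then p + j else p + m + idx (j - m))"
    (is "vinc_occurrence _ _ _ ?idx")
proof -
  have inc: "\<And>j. j + 1 < sum_list ms \<Longrightarrow> idx j < idx (j + 1)"
    and P: "\<And>j. j < sum_list ms \<Longrightarrow> P (p + m + idx j)"
    and adj: "\<And>j. j + 1 < sum_list ms \<Longrightarrow> j + 1 \<notin> vinc_gaps ms \<Longrightarrow> idx (j + 1) = idx j + 1"
    using occ unfolding vinc_occurrence_def by auto
  have lt: "\<And>j. j < sum_list ms \<Longrightarrow> idx j < n - (p + m)"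
    using vinc_occurrence_lt[OF occ] by blast
  show ?thesis
    unfolding vinc_occurrence_def
  proof (intro conjI allI impI)
    fix j assume "j + 1 < sum_list (m # ms)"
    then show "?idx j < ?idx (j + 1)"
      using inc[of "j - m"] by (auto simp: Suc_diff_le)
  next
    show "?idx (sum_list (m # ms) - 1) < n"
      using lt[of "sum_list ms - 1"] assms(1,2) by (cases "sum_list ms") (auto simp del: sum_list_eq_0_iff)
  next
    fix j assume "j < sum_list (m # ms)"
    then show "P (?idx j)" using assms(3) P[of "j - m"] by auto
  next
    fix j assume j: "j + 1 < sum_list (m # ms) \<and> j + 1 \<notin> vinc_gaps (m # ms)"
    have "j + 1 \<noteq> m" using j by (cases "ms = []") (auto simp: vinc_gaps_Cons)
    moreover have "j - m + 1 \<notin> vinc_gaps ms" if "m \<le> j"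
    proof
      assume gap: "j - m + 1 \<in> vinc_gaps ms"
      then have "ms \<noteq> []" by (auto simp: vinc_gaps_def)
      then have "m + (j - m + 1) \<in> vinc_gaps (m # ms)" using gap by (simp add: vinc_gaps_Cons)
      then show False using j that by simp
    qed
    ultimately show "?idx (j + 1) = ?idx j + 1"
      using j adj[of "j - m"] by (auto simp: Suc_diff_le)
  qed
qed

lemma contains_vinc_on_Cons:
  assumes "0 < m"
  shows "contains_vinc_on (m # ms) P n \<longleftrightarrow>
    (\<exists>p. p + m \<le> n \<and> (\<forall>j<m. P (p + j)) \<and> contains_vinc_on ms (\<lambda>q. P (p + m + q)) (n - (p + m)))"
  using vinc_occurrence_ConsD[OF assms] vinc_occurrence_ConsI[OF assms]
  unfolding contains_vinc_on_def by meson

definition mask_contains :: "nat list \<Rightarrow> bool list \<Rightarrow> bool" where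
  "mask_contains ms b = contains_vinc_on ms (\<lambda>q. b ! q) (length b)"

lemma mask_contains_Nil [simp]: "mask_contains [] b"
  by (simp add: mask_contains_def contains_vinc_on_Nil)

lemma mask_contains_Cons:
  assumes "0 < m"
  shows "mask_contains (m # ms) b \<longleftrightarrow>
    (\<exists>p. p + m \<le> length b \<and> (\<forall>j<m. b ! (p + j)) \<and> mask_contains ms (drop (p + m) b))"
proof -
  have "contains_vinc_on ms (\<lambda>q. b ! (p + m + q)) (length b - (p + m)) = mask_contains ms (drop (p + m) b)"
    if "p + m \<le> length b" for p
    unfolding mask_contains_def length_drop using that by (intro contains_vinc_on_cong) auto
  then show ?thesis unfolding mask_contains_def contains_vinc_on_Cons[OF assms] by (metis (no_types, lifting))
qed

lemma mask_contains_append: "0 \<notin> set ms \<Longrightarrow> mask_contains ms v \<Longrightarrow> mask_contains ms (x @ v)"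
proof (induction ms arbitrary: v)
  case (Cons m ms)
  then have m: "0 < m" by auto
  then obtain p where p: "p + m \<le> length v" "\<forall>j<m. v ! (p + j)" "mask_contains ms (drop (p + m) v)"
    using Cons.prems mask_contains_Cons by blast
  then show ?case
    unfolding mask_contains_Cons[OF m] by (intro exI[of _ "length x + p"]) (auto simp: nth_append)
qed simp

lemma mask_contains_Cons_long_run:
  assumes "0 < m" "0 \<notin> set ms" "m \<le> h"
  shows "mask_contains (m # ms) (replicate h True @ y) \<longleftrightarrow> mask_contains ms (replicate (h - m) True @ y)"
proof
  let ?w = "replicate h True @ y"
  have rest: "drop m ?w = replicate (h - m) True @ y" using assms(3) by simp
  assume "mask_contains (m # ms) ?w"
  then obtain p where "mask_contains ms (drop (p + m) ?w)"
    using mask_contains_Cons[OF assms(1)] by blast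
  then have "mask_contains ms (take p (drop m ?w) @ drop p (drop m ?w))"
    by (intro mask_contains_append[OF assms(2)]) (simp only: drop_drop)
  then show "mask_contains ms (replicate (h - m) True @ y)" by (simp only: append_take_drop_id rest)
next
  assume "mask_contains ms (replicate (h - m) True @ y)"
  then show "mask_contains (m # ms) (replicate h True @ y)"
    unfolding mask_contains_Cons[OF assms(1)] using assms(3)
    by (intro exI[of _ 0]) (auto simp: nth_append)
qed

lemma mask_contains_Cons_short_run:
  assumes "0 < m" "0 \<notin> set ms" "h < m"
  shows "mask_contains (m # ms) (replicate h True @ False # y) \<longleftrightarrow> mask_contains (m # ms) y"
proof
  let ?w = "replicate h True @ False # y"
  assume "mask_contains (m # ms) ?w"
  then obtain p where p: "p + m \<le> length ?w" "\<forall>j<m. ?w ! (p + j)" "mask_contains ms (drop (p + m) ?w)"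
    using mask_contains_Cons[OF assms(1)] by blast
  \<comment> \<open>the block cannot cover the separating False at position h\<close>
  have "h < p"
  proof (rule ccontr)
    assume "\<not> h < p"
    have "h - p < m" using assms(3) by simp
    then have "?w ! (p + (h - p))" using p(2) by blast
    then show False using \<open>\<not> h < p\<close> by (simp add: nth_append)
  qed
  moreover have "p + m - h = Suc (p - Suc h + m)" using \<open>h < p\<close> by simp
  ultimately have "p - Suc h + m \<le> length y" "\<forall>j<m. y ! (p - Suc h + j)"
    "drop (p - Suc h + m) y = drop (p + m) ?w"
    using p(1,2) by (auto simp: nth_append)
  then show "mask_contains (m # ms) y"
    unfolding mask_contains_Cons[OF assms(1)] using p(3) by metis
next
  assume "mask_contains (m # ms) y"
  then show "mask_contains (m # ms) (replicate h True @ False # y)"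
    using mask_contains_append[of "m # ms" y "replicate h True @ [False]"] assms by simp
qed

lemma not_mask_contains_Cons_short:
  assumes "0 < m" "length b < m"
  shows "\<not> mask_contains (m # ms) b"
  using assms mask_contains_Cons by fastforce

text \<open>blocks_fit ms h c: the blocks ms fit, in order and each inside one run, into what remains
  (h letters) of the current run followed by runs of lengths c. Placing each block as early as
  possible is optimal, which is why this greedy test decides containment.\<close>

fun blocks_fit :: "nat list \<Rightarrow> nat \<Rightarrow> nat list \<Rightarrow> bool" where
  "blocks_fit [] h c = True"
| "blocks_fit (m # ms) h c = (if m \<le> h then blocks_fit ms (h - m) c
     else (case c of [] \<Rightarrow> False | s # c' \<Rightarrow> blocks_fit (m # ms) s c'))"

text \<open>true_runs h b lists the lengths of the maximal runs of True in replicate h True @ b.\<close>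

fun true_runs :: "nat \<Rightarrow> bool list \<Rightarrow> nat list" where
  "true_runs h [] = (if h = 0 then [] else [h])"
| "true_runs h (True # b) = true_runs (Suc h) b"
| "true_runs h (False # b) = (if h = 0 then true_runs 0 b else h # true_runs 0 b)"

lemma blocks_fit_0_Cons: "0 \<notin> set ms \<Longrightarrow> blocks_fit ms 0 (s # c) = blocks_fit ms s c"
  by (cases ms) auto

lemma blocks_fit_Cons_short: "h < m \<Longrightarrow> 0 < m \<Longrightarrow> blocks_fit (m # ms) h c = blocks_fit (m # ms) 0 c"
  by simp

lemma blocks_fit_true_runs_False:
  "0 \<notin> set ms \<Longrightarrow> blocks_fit ms 0 (true_runs h (False # b)) = blocks_fit ms h (true_runs 0 b)"
  by (simp add: blocks_fit_0_Cons)

lemma mask_contains_replicate_iff_blocks_fit: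
  "0 \<notin> set ms \<Longrightarrow> mask_contains ms (replicate h True) \<longleftrightarrow> blocks_fit ms h []"
proof (induction ms arbitrary: h)
  case (Cons m ms)
  then show ?case
    using mask_contains_Cons_long_run[of m ms h "[]"] not_mask_contains_Cons_short[of m "replicate h True" ms]
    by (cases "m \<le> h") auto
qed simp

lemma mask_contains_iff_blocks_fit_true_runs:
  "0 \<notin> set ms \<Longrightarrow> mask_contains ms (replicate h True @ b) \<longleftrightarrow> blocks_fit ms 0 (true_runs h b)"
proof (induction b arbitrary: h ms)
  case Nil
  then show ?case using mask_contains_replicate_iff_blocks_fit[of ms h] blocks_fit_0_Cons[of ms h "[]"] by simp
next
  case (Cons x b)
  show ?case
  proof (cases x)
    case True
    then show ?thesis using Cons.IH[of ms "Suc h"] Cons.prems by (simp add: replicate_app_Cons_same)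
  next
    case False
    have IH: "mask_contains ms' b \<longleftrightarrow> blocks_fit ms' 0 (true_runs 0 b)" if "0 \<notin> set ms'" for ms'
      using Cons.IH[OF that, of 0] by simp
    have "mask_contains ms (replicate h True @ False # b) \<longleftrightarrow> blocks_fit ms h (true_runs 0 b)"
      using Cons.prems
    proof (induction ms arbitrary: h)
      case (Cons m ms)
      then have m: "0 < m" "0 \<notin> set ms" by auto
      show ?case
      proof (cases "m \<le> h")
        case True
        then show ?thesis using mask_contains_Cons_long_run[OF m True] Cons.IH[OF m(2)] by simp
      next
        case False
        then have "h < m" by simp
        then show ?thesis
          using mask_contains_Cons_short_run[OF m] IH[OF Cons.prems] blocks_fit_Cons_short[OF _ m(1)]
          by simp
      qed
    qed simp
    then show ?thesis using False blocks_fit_true_runs_False[OF Cons.prems] by simp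
  qed
qed

definition letter_runs :: "'a \<Rightarrow> 'a list \<Rightarrow> nat list" where
  "letter_runs i w = true_runs 0 (map (\<lambda>x. x = i) w)"

lemma contains_vinc_iff_blocks_fit:
  assumes "0 \<notin> set ms" "ms \<noteq> []"
  shows "contains_vinc ms w \<longleftrightarrow> (\<exists>i. blocks_fit ms 0 (letter_runs i w))"
proof -
  have "0 < sum_list ms" using assms by (cases ms) auto
  moreover have "contains_vinc_on ms (\<lambda>p. w ! p = i) (length w) = mask_contains ms (map (\<lambda>x. x = i) w)" for i
    unfolding mask_contains_def length_map by (intro contains_vinc_on_cong) auto
  ultimately show ?thesis
    using contains_vinc_iff_letter mask_contains_iff_blocks_fit_true_runs[OF assms(1), of 0]
    unfolding letter_runs_def by simp
qed

lemma sum_list_true_runs: "sum_list (true_runs h b) = h + count_list b True"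
  by (induction h b rule: true_runs.induct) auto

lemma zero_notin_true_runs: "0 \<notin> set (true_runs h b)"
  by (induction h b rule: true_runs.induct) auto

lemma true_runs_replicate_True: "true_runs h (replicate n True @ b) = true_runs (h + n) b"
  by (induction n arbitrary: h) auto

lemma true_runs_0_replicate_False: "true_runs 0 (replicate n False @ b) = true_runs 0 b"
  by (induction n) auto

lemma true_runs_flush: "0 < h \<Longrightarrow> b = [] \<or> hd b = False \<Longrightarrow> true_runs h b = h # true_runs 0 b"
  by (cases b) auto

lemma count_list_eq_sum_letter_runs: "count_list w i = sum_list (letter_runs i w)"
  unfolding letter_runs_def sum_list_true_runs by (induction w) auto

lemma zero_notin_letter_runs: "0 \<notin> set (letter_runs i w)"
  by (simp add: letter_runs_def zero_notin_true_runs)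

section \<open>Run-length encoding and Smirnov words\<close>

fun runs :: "'a list \<Rightarrow> ('a \<times> nat) list" where
  "runs [] = []"
| "runs (x # xs) = (case runs xs of [] \<Rightarrow> [(x, 1)]
     | (y, n) # r \<Rightarrow> if x = y then (y, Suc n) # r else (x, 1) # (y, n) # r)"

definition concat_runs :: "('a \<times> nat) list \<Rightarrow> 'a list" where
  "concat_runs L = concat (map (\<lambda>(x, n). replicate n x) L)"

definition proper_runs :: "('a \<times> nat) list \<Rightarrow> bool" where
  "proper_runs L \<longleftrightarrow> (\<forall>p\<in>set L. 0 < snd p) \<and> successively (\<lambda>p q. fst p \<noteq> fst q) L"

definition run_lengths :: "'a \<Rightarrow> ('a \<times> nat) list \<Rightarrow> nat list" where
  "run_lengths i L = map snd (filter (\<lambda>p. fst p = i) L)"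

lemma concat_runs_Nil [simp]: "concat_runs [] = []"
  and concat_runs_Cons [simp]: "concat_runs ((x, n) # L) = replicate n x @ concat_runs L"
  by (simp_all add: concat_runs_def)

lemma runs_Cons_shape: "\<exists>n r. runs (x # xs) = (x, n) # r"
  by (cases "runs xs") (auto split: prod.splits)

lemma concat_runs_runs: "concat_runs (runs w) = w"
  by (induction w) (auto split: list.splits prod.splits)

lemma proper_runs_runs: "proper_runs (runs w)"
proof (induction w)
  case (Cons x xs)
  then show ?case
    by (cases "runs xs") (auto simp: proper_runs_def successively_Cons split: prod.splits)
qed (simp add: proper_runs_def)

lemma runs_replicate_append:
  assumes "0 < n" "ys = [] \<or> hd ys \<noteq> x"
  shows "runs (replicate n x @ ys) = (x, n) # runs ys"
  using assms(1)
proof (induction n)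
  case (Suc n)
  show ?case
  proof (cases "n = 0")
    case True
    then show ?thesis using assms(2) runs_Cons_shape[of "hd ys" "tl ys"] by (cases ys) auto
  qed (use Suc in simp)
qed simp

lemma proper_runs_Cons: "proper_runs ((x, n) # L) \<longleftrightarrow> 0 < n \<and> proper_runs L \<and> (L = [] \<or> fst (hd L) \<noteq> x)"
  by (cases L) (auto simp: proper_runs_def)

lemma hd_concat_runs: "proper_runs L \<Longrightarrow> L \<noteq> [] \<Longrightarrow> concat_runs L \<noteq> [] \<and> hd (concat_runs L) = fst (hd L)"
  by (cases L) (auto simp: proper_runs_Cons)

lemma runs_concat_runs: "proper_runs L \<Longrightarrow> runs (concat_runs L) = L"
proof (induction L)
  case (Cons p L)
  obtain x n where p: "p = (x, n)" by (cases p)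
  have v: "0 < n" "proper_runs L" "L = [] \<or> fst (hd L) \<noteq> x" using Cons.prems unfolding p proper_runs_Cons by auto
  have "concat_runs L = [] \<or> hd (concat_runs L) \<noteq> x"
  proof (cases "L = []")
    case False then show ?thesis using hd_concat_runs[OF v(2) False] v(3) by auto
  qed simp
  then show ?case using runs_replicate_append[of n "concat_runs L" x] v Cons.IH p by simp
qed simp

lemma letter_runs_concat_runs: "proper_runs L \<Longrightarrow> letter_runs i (concat_runs L) = run_lengths i L"
proof (induction L)
  case (Cons p L)
  obtain x n where p: "p = (x, n)" by (cases p)
  have L: "0 < n" "proper_runs L" "L = [] \<or> fst (hd L) \<noteq> x"
    using Cons.prems unfolding p proper_runs_Cons by auto
  let ?r = "map (\<lambda>y. y = i) (concat_runs L)"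
  have IH: "true_runs 0 ?r = run_lengths i L" using Cons.IH L(2) unfolding letter_runs_def by simp
  show ?case
  proof (cases "x = i")
    case True
    have "?r = [] \<or> hd ?r = False"
      using hd_concat_runs[OF L(2)] L(3) True by (cases "L = []") (auto simp: hd_map)
    then show ?thesis
      using True IH p L(1) by (simp add: letter_runs_def run_lengths_def true_runs_replicate_True true_runs_flush)
  next
    case False
    then show ?thesis using IH p true_runs_0_replicate_False unfolding letter_runs_def run_lengths_def by simp
  qed
qed (simp add: letter_runs_def run_lengths_def)

lemma letter_runs_eq_run_lengths: "letter_runs i w = run_lengths i (runs w)"
  using letter_runs_concat_runs[OF proper_runs_runs, of i w] concat_runs_runs[of w] by simp

lemma count_list_map_fst: "count_list (map fst L) i = length (run_lengths i L)"
  by (induction L) (auto simp: run_lengths_def)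

lemma set_concat_runs: "proper_runs L \<Longrightarrow> set (concat_runs L) = fst ` set L"
proof (induction L)
  case (Cons p L)
  obtain x n where p: "p = (x, n)" by (cases p)
  then show ?case using Cons proper_runs_Cons[of x n L] by auto
qed simp

lemma run_lengths_inj: "map fst L = map fst L' \<Longrightarrow> (\<forall>i. run_lengths i L = run_lengths i L') \<Longrightarrow> L = L'"
proof (induction L arbitrary: L')
  case Nil then show ?case by simp
next
  case (Cons p L)
  obtain p' L'' where L': "L' = p' # L''" using Cons.prems(1) by (cases L') auto
  have f: "fst p = fst p'" "map fst L = map fst L''" using Cons.prems(1) L' by auto
  have c: "run_lengths (fst p) (p # L) = run_lengths (fst p) (p' # L'')" using Cons.prems(2) L' by blast
  then have s: "snd p = snd p'" using f unfolding run_lengths_def by simp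
  have "run_lengths i L = run_lengths i L''" for i
  proof -
    have "run_lengths i (p # L) = run_lengths i (p' # L'')" using Cons.prems(2) L' by blast
    then show ?thesis using f(1) unfolding run_lengths_def by (cases "fst p = i") simp_all
  qed
  then have "L = L''" using Cons.IH f by blast
  then show ?case using L' f s by (simp add: prod_eq_iff)
qed

fun interleave_runs :: "'a list \<Rightarrow> ('a \<Rightarrow> nat list) \<Rightarrow> ('a \<times> nat) list" where
  "interleave_runs [] c = []"
| "interleave_runs (x # s) c = (x, hd (c x)) # interleave_runs s (c(x := tl (c x)))"

lemma interleave_runs_correct:
  "(\<forall>i. count_list s i = length (c i)) \<Longrightarrow> map fst (interleave_runs s c) = s \<and> (\<forall>i. run_lengths i (interleave_runs s c) = c i)"
proof (induction s arbitrary: c)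
  case Nil
  then show ?case by (auto simp: run_lengths_def)
next
  case (Cons x s)
  let ?c = "c(x := tl (c x))"
  have "\<forall>i. count_list s i = length (?c i)"
  proof
    fix i show "count_list s i = length (?c i)" using Cons.prems[rule_format, of i] by (cases "i = x") auto
  qed
  then have IH: "map fst (interleave_runs s ?c) = s" "\<forall>i. run_lengths i (interleave_runs s ?c) = ?c i" using Cons.IH by auto
  have "length (c x) = count_list s x + 1" using Cons.prems[rule_format, of x] by simp
  then have ne: "c x \<noteq> []" by auto
  have "run_lengths i (interleave_runs (x # s) c) = c i" for i
  proof (cases "i = x")
    case True
    then show ?thesis using IH(2) ne unfolding run_lengths_def by (simp add: True)
  next
    case False
    then show ?thesis using IH(2)[rule_format, of i] unfolding run_lengths_def by simp
  qed
  then show ?case using IH by simp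
qed

lemma proper_runs_iff:
  "proper_runs L \<longleftrightarrow> (\<forall>i. 0 \<notin> set (run_lengths i L)) \<and> successively (\<noteq>) (map fst L)"
  by (force simp: proper_runs_def run_lengths_def successively_map)

lemma fst_set_runs: "fst ` set (runs w) = set w"
  using set_concat_runs[OF proper_runs_runs, of w] by (simp add: concat_runs_runs)

lemma run_lengths_notin: "i \<notin> fst ` set L \<Longrightarrow> run_lengths i L = []"
  by (induction L) (auto simp: run_lengths_def)

definition words_with_runs :: "'a set \<Rightarrow> ('a \<Rightarrow> nat list) \<Rightarrow> 'a list set" where
  "words_with_runs I c = {w. set w \<subseteq> I \<and> (\<forall>i\<in>I. letter_runs i w = c i)}"

definition smirnov_words :: "'a set \<Rightarrow> ('a \<Rightarrow> nat) \<Rightarrow> 'a list set" where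
  "smirnov_words I r = {s. set s \<subseteq> I \<and> successively (\<noteq>) s \<and> (\<forall>i\<in>I. count_list s i = r i)}"

lemma bij_betw_words_with_runs:
  assumes "\<forall>i\<in>I. 0 \<notin> set (c i)"
  shows "bij_betw (\<lambda>w. map fst (runs w)) (words_with_runs I c) (smirnov_words I (\<lambda>i. length (c i)))"
proof (rule bij_betw_imageI)
  show "inj_on (\<lambda>w. map fst (runs w)) (words_with_runs I c)"
  proof (rule inj_onI)
    fix w w' assume w: "w \<in> words_with_runs I c" and w': "w' \<in> words_with_runs I c"
      and eq: "map fst (runs w) = map fst (runs w')"
    have "run_lengths i (runs w) = run_lengths i (runs w')" for i
    proof (cases "i \<in> I")
      case False
      then have "i \<notin> set w" "i \<notin> set w'" using w w' unfolding words_with_runs_def by auto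
      then show ?thesis by (simp add: run_lengths_notin fst_set_runs)
    qed (use w w' in \<open>simp add: words_with_runs_def letter_runs_eq_run_lengths\<close>)
    then show "w = w'" using run_lengths_inj[OF eq] concat_runs_runs by metis
  qed
  show "(\<lambda>w. map fst (runs w)) ` words_with_runs I c = smirnov_words I (\<lambda>i. length (c i))"
  proof (intro equalityI subsetI)
    fix s assume "s \<in> (\<lambda>w. map fst (runs w)) ` words_with_runs I c"
    then obtain w where w: "w \<in> words_with_runs I c" "s = map fst (runs w)" by blast
    then show "s \<in> smirnov_words I (\<lambda>i. length (c i))"
      using proper_runs_runs[of w] fst_set_runs[of w]
      unfolding smirnov_words_def words_with_runs_def proper_runs_iff
      by (auto simp: count_list_map_fst letter_runs_eq_run_lengths)
  next
    fix s assume s: "s \<in> smirnov_words I (\<lambda>i. length (c i))"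
    define c' where "c' i = (if i \<in> I then c i else [])" for i
    have "\<forall>i. count_list s i = length (c' i)"
      using s unfolding smirnov_words_def c'_def by (auto simp: count_list_0_iff)
    then obtain L where L: "map fst L = s" "\<And>i. run_lengths i L = c' i"
      using interleave_runs_correct by blast
    have "proper_runs L"
      using s assms unfolding proper_runs_iff L smirnov_words_def c'_def by auto
    then have "runs (concat_runs L) = L" "set (concat_runs L) = set s"
      using runs_concat_runs set_concat_runs L(1) by (metis, metis list.set_map)
    then have "concat_runs L \<in> words_with_runs I c"
      using s L(2) unfolding words_with_runs_def smirnov_words_def letter_runs_eq_run_lengths c'_def by simp
    then show "s \<in> (\<lambda>w. map fst (runs w)) ` words_with_runs I c"
      using \<open>runs (concat_runs L) = L\<close> L(1) by force
  qed
qed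

lemma card_words_with_runs:
  "\<forall>i\<in>I. 0 \<notin> set (c i) \<Longrightarrow> card (words_with_runs I c) = card (smirnov_words I (\<lambda>i. length (c i)))"
  using bij_betw_words_with_runs bij_betw_same_card by blast

section \<open>Counting words by the runs of each letter\<close>

definition compositions :: "nat \<Rightarrow> nat list set" where
  "compositions a = {c. sum_list c = a \<and> 0 \<notin> set c}"

lemma length_le_sum_list: "0 \<notin> set c \<Longrightarrow> length c \<le> sum_list c"
  by (induction c) (auto simp: Suc_le_eq)

lemma finite_compositions: "finite (compositions a)"
proof (rule finite_subset)
  show "compositions a \<subseteq> {xs. set xs \<subseteq> {0..a} \<and> length xs \<le> a}"
    using length_le_sum_list member_le_sum_list unfolding compositions_def by fastforce
qed (rule finite_lists_length_le; simp)

lemma compositions_0: "compositions 0 = {[]}"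
proof -
  have "c = []" if "c \<in> compositions 0" for c using that unfolding compositions_def by (cases c) auto
  then show ?thesis unfolding compositions_def by auto
qed

lemma compositions_pos: "0 < a \<Longrightarrow> compositions a = (\<Union>s\<in>{1..a}. (\<lambda>c. s # c) ` compositions (a - s))"
proof
  assume a: "0 < a"
  show "compositions a \<subseteq> (\<Union>s\<in>{1..a}. (\<lambda>c. s # c) ` compositions (a - s))"
  proof
    fix c assume c: "c \<in> compositions a"
    then obtain s c' where "c = s # c'" using a unfolding compositions_def by (cases c) auto
    then show "c \<in> (\<Union>s\<in>{1..a}. (\<lambda>c. s # c) ` compositions (a - s))" using c unfolding compositions_def
      by (auto intro!: bexI[of _ s])
  qed
  show "(\<Union>s\<in>{1..a}. (\<lambda>c. s # c) ` compositions (a - s)) \<subseteq> compositions a"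
    unfolding compositions_def by auto
qed

lemma sum_compositions:
  "(\<Sum>c\<in>compositions a. f c) = (if a = 0 then f [] else (\<Sum>s\<in>{1..a}. \<Sum>c\<in>compositions (a - s). f (s # c)))"
proof (cases "a = 0")
  case False
  then have ca: "compositions a = (\<Union>s\<in>{1..a}. (\<lambda>c. s # c) ` compositions (a - s))" using compositions_pos by simp
  have "(\<Sum>c\<in>compositions a. f c) = (\<Sum>s\<in>{1..a}. \<Sum>c\<in>(\<lambda>c. s # c) ` compositions (a - s). f c)"
    unfolding ca using finite_compositions by (intro sum.UNION_disjoint) auto
  also have "\<dots> = (\<Sum>s\<in>{1..a}. \<Sum>c\<in>compositions (a - s). f (s # c))"
    by (simp add: sum.reindex inj_on_def comp_def)
  finally show ?thesis using False by simp
qed (simp add: compositions_0)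

lemma letter_runs_in_compositions: "letter_runs i w \<in> compositions (count_list w i)"
  by (simp add: compositions_def count_list_eq_sum_letter_runs zero_notin_letter_runs)

lemma finite_words_with_runs:
  assumes "finite I"
  shows "finite (words_with_runs I c)"
proof (rule finite_subset)
  show "words_with_runs I c \<subseteq> {w. set w \<subseteq> I \<and> length w \<le> (\<Sum>i\<in>I. sum_list (c i))}"
  proof
    fix w assume "w \<in> words_with_runs I c"
    then have "set w \<subseteq> I" "length w = (\<Sum>i\<in>I. sum_list (c i))"
      using sum_count_set[of w I] assms unfolding words_with_runs_def
      by (auto simp: count_list_eq_sum_letter_runs)
    then show "w \<in> {w. set w \<subseteq> I \<and> length w \<le> (\<Sum>i\<in>I. sum_list (c i))}" by simp
  qed
qed (rule finite_lists_length_le[OF assms])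

lemma words_with_counts_eq_UN_words_with_runs:
  "{w. set w \<subseteq> I \<and> (\<forall>i\<in>I. Q i (letter_runs i w)) \<and> (\<forall>i\<in>I. count_list w i = \<alpha> i)}
    = (\<Union>c\<in>PiE I (\<lambda>i. {r\<in>compositions (\<alpha> i). Q i r}). words_with_runs I c)"
    (is "?W = ?U")
proof (intro equalityI subsetI)
  fix w assume w: "w \<in> ?W"
  have "letter_runs i w \<in> {r\<in>compositions (\<alpha> i). Q i r}" if "i \<in> I" for i
    using w that letter_runs_in_compositions[of i w] by simp
  then have "restrict (\<lambda>i. letter_runs i w) I \<in> PiE I (\<lambda>i. {r\<in>compositions (\<alpha> i). Q i r})"
    by auto
  moreover have "w \<in> words_with_runs I (restrict (\<lambda>i. letter_runs i w) I)"
    using w unfolding words_with_runs_def by simp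
  ultimately show "w \<in> ?U" by blast
next
  fix w assume "w \<in> ?U"
  then show "w \<in> ?W"
    unfolding words_with_runs_def compositions_def by (auto simp: count_list_eq_sum_letter_runs)
qed

lemma card_words_by_letter_runs:
  assumes "finite I"
  shows "card {w. set w \<subseteq> I \<and> (\<forall>i\<in>I. Q i (letter_runs i w)) \<and> (\<forall>i\<in>I. count_list w i = \<alpha> i)}
    = (\<Sum>c\<in>PiE I (\<lambda>i. {r\<in>compositions (\<alpha> i). Q i r}). card (words_with_runs I c))"
proof -
  let ?P = "PiE I (\<lambda>i. {r\<in>compositions (\<alpha> i). Q i r})"
  have disjoint: "words_with_runs I c \<inter> words_with_runs I c' = {}"
    if "c \<in> ?P" "c' \<in> ?P" "c \<noteq> c'" for c c'
  proof -
    have "\<exists>i\<in>I. c i \<noteq> c' i" using PiE_ext[OF that(1,2)] that(3) by blast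
    then show ?thesis unfolding words_with_runs_def by auto
  qed
  show ?thesis
    unfolding words_with_counts_eq_UN_words_with_runs
  proof (rule card_UN_disjoint)
    show "finite ?P" using assms finite_compositions by (intro finite_PiE) simp_all
    show "\<forall>c\<in>?P. finite (words_with_runs I c)" using finite_words_with_runs[OF assms] by blast
    show "\<forall>c\<in>?P. \<forall>c'\<in>?P. c \<noteq> c' \<longrightarrow> words_with_runs I c \<inter> words_with_runs I c' = {}"
      using disjoint by blast
  qed
qed

lemma words_with_counts_eq_permutations_of_multiset:
  assumes "finite I"
  shows "{w. set w \<subseteq> I \<and> (\<forall>i\<in>I. count_list w i = a i)}
    = permutations_of_multiset (\<Sum>i\<in>I. replicate_mset (a i) i)"
proof -
  have "set w \<subseteq> I \<and> (\<forall>i\<in>I. count_list w i = a i) \<longleftrightarrow>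
      (\<forall>x. count_list w x = (if x \<in> I then a x else 0))" for w
    by (auto simp: count_list_0_iff)
  then show ?thesis
    using assms unfolding permutations_of_multiset_def multiset_eq_iff
    by (simp add: count_sum count_mset sum.delta)
qed

lemma card_words_with_counts:
  assumes "finite I"
  shows "real (card {w. set w \<subseteq> I \<and> (\<forall>i\<in>I. count_list w i = a i)})
    = fact (\<Sum>i\<in>I. a i) / (\<Prod>i\<in>I. fact (a i))"
proof -
  define M where "M = (\<Sum>i\<in>I. replicate_mset (a i) i)"
  have count_M: "count M x = (if x \<in> I then a x else 0)" for x
    unfolding M_def count_sum using assms by (simp add: sum.delta)
  have set_M: "set_mset M = {i\<in>I. 0 < a i}" using count_M by (auto simp: set_mset_def)
  have "(\<Prod>x\<in>set_mset M. fact (count M x)) = (\<Prod>i\<in>I. fact (a i) :: nat)"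
    unfolding set_M using assms by (intro prod.mono_neutral_cong_left) (auto simp: count_M)
  moreover have "size M = (\<Sum>i\<in>I. a i)"
    unfolding size_multiset_overloaded_eq set_M using assms
    by (intro sum.mono_neutral_cong_left) (auto simp: count_M)
  ultimately have "card (permutations_of_multiset M) * (\<Prod>i\<in>I. fact (a i)) = fact (\<Sum>i\<in>I. a i)"
    using card_permutations_of_multiset_aux[of M] by simp
  then have "real (card (permutations_of_multiset M) * (\<Prod>i\<in>I. fact (a i))) = fact (\<Sum>i\<in>I. a i)"
    by (simp only: of_nat_fact)
  then have "real (card (permutations_of_multiset M)) * (\<Prod>i\<in>I. fact (a i)) = fact (\<Sum>i\<in>I. a i)"
    by (simp only: of_nat_mult of_nat_prod of_nat_fact)
  moreover have "(\<Prod>i\<in>I. fact (a i) :: real) \<noteq> 0" using assms by (simp add: prod_zero_iff)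
  ultimately show ?thesis
    unfolding words_with_counts_eq_permutations_of_multiset[OF assms] M_def[symmetric]
    by (simp add: eq_divide_eq)
qed

section \<open>The functional Phi and the polynomials l_r\<close>

lemma Phi_alt: "degree p \<le> N \<Longrightarrow> Phi p = (\<Sum>j\<le>N. coeff p j * fact j)"
  unfolding Phi_def by (intro sum.mono_neutral_left) (auto simp: coeff_eq_0)

lemma Phi_add: "Phi (p + q) = Phi p + Phi q"
proof -
  let ?N = "max (degree p) (degree q)"
  have "Phi (p + q) = (\<Sum>j\<le>?N. coeff (p + q) j * fact j)"
    by (rule Phi_alt) (simp add: degree_add_le)
  also have "\<dots> = (\<Sum>j\<le>?N. coeff p j * fact j) + (\<Sum>j\<le>?N. coeff q j * fact j)"
    by (simp add: algebra_simps sum.distrib)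
  also have "\<dots> = Phi p + Phi q" using Phi_alt[of p ?N] Phi_alt[of q ?N] by simp
  finally show ?thesis .
qed

lemma Phi_zero [simp]: "Phi 0 = 0"
  by (simp add: Phi_def)

lemma Phi_sum: "Phi (\<Sum>x\<in>A. f x) = (\<Sum>x\<in>A. Phi (f x))"
  by (induction A rule: infinite_finite_induct) (simp_all add: Phi_add)

lemma Phi_monom: "Phi (monom c n) = c * fact n"
proof -
  have "Phi (monom c n) = (\<Sum>j\<le>n. coeff (monom c n) j * fact j)"
    by (rule Phi_alt) (simp add: degree_monom_le)
  also have "\<dots> = (\<Sum>j\<le>n. if j = n then c * fact j else 0)"
    by (intro sum.cong) (auto simp: coeff_monom)
  finally show ?thesis by simp
qed

lemma prod_monom: "(\<Prod>i\<in>I. monom (c i) (n i)) = monom (\<Prod>i\<in>I. c i) (\<Sum>i\<in>I. n i)"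
  by (induction I rule: infinite_finite_induct) (simp_all add: mult_monom monom_0 one_pCons)

definition Y_series :: "real fps" where "Y_series = fps_X * inverse (1 + fps_X)"

lemma coeff_lpoly: "coeff (lpoly r) j = (Y_series ^ j) $ r / fact j"
proof -
  have "coeff (lpoly r) j = (\<Sum>i\<le>r. if i = j then (Y_series ^ i) $ r / fact i else 0)"
    unfolding lpoly_def coeff_sum coeff_monom Y_series_def by (intro sum.cong) auto
  also have "\<dots> = (if j \<le> r then (Y_series ^ j) $ r / fact j else 0)"
    by (simp add: sum.delta)
  also have "\<dots> = (Y_series ^ j) $ r / fact j"
  proof (cases "j \<le> r")
    case False
    have "Y_series ^ j = fps_X ^ j * inverse (1 + fps_X) ^ j" unfolding Y_series_def by (simp add: power_mult_distrib)
    then have "(Y_series ^ j) $ r = 0" using False by (simp add: fps_X_power_mult_nth)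
    then show ?thesis using False by simp
  qed simp
  finally show ?thesis .
qed

definition Z_series :: "real fps" where "Z_series = Abs_fps (\<lambda>n. if n = 0 then 0 else 1)"

lemma count_compositions_length: "(\<Sum>c\<in>compositions a. if length c = r then 1 else 0 :: real) = (Z_series ^ r) $ a"
proof (induction r arbitrary: a)
  case 0
  show ?case by (subst sum_compositions) auto
next
  case (Suc r)
  show ?case
  proof (cases "a = 0")
    case True
    then show ?thesis by (subst sum_compositions) (simp add: fps_mult_nth Z_series_def)
  next
    case False
    have "(\<Sum>c\<in>compositions a. if length c = Suc r then 1 else 0 :: real)
        = (\<Sum>s\<in>{1..a}. \<Sum>c\<in>compositions (a - s). if length c = r then 1 else 0)"
      using False by (subst sum_compositions) simp
    also have "\<dots> = (\<Sum>s\<in>{1..a}. (Z_series ^ r) $ (a - s))" using Suc.IH by simp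
    also have "\<dots> = (\<Sum>i=0..a. Z_series $ i * (Z_series ^ r) $ (a - i))"
    proof -
      have "(\<Sum>i=0..a. Z_series $ i * (Z_series ^ r) $ (a - i)) = (\<Sum>i\<in>{1..a}. Z_series $ i * (Z_series ^ r) $ (a - i))"
        by (intro sum.mono_neutral_right) (auto simp: Z_series_def)
      also have "\<dots> = (\<Sum>s\<in>{1..a}. (Z_series ^ r) $ (a - s))" by (intro sum.cong) (auto simp: Z_series_def)
      finally show ?thesis by simp
    qed
    also have "\<dots> = (Z_series ^ Suc r) $ a" by (simp add: fps_mult_nth)
    finally show ?thesis .
  qed
qed

lemma Z_series_mult: "Z_series * (1 - fps_X) = fps_X"
proof -
  have e: "Z_series * (1 - fps_X) = Z_series - fps_X * Z_series" by (simp add: algebra_simps)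
  show ?thesis unfolding e
  proof (rule fps_ext)
    fix n show "(Z_series - fps_X * Z_series) $ n = fps_X $ n"
    proof (cases n)
      case (Suc k)
      then show ?thesis by (cases k) (simp_all add: Z_series_def)
    qed (simp add: Z_series_def)
  qed
qed

lemma Y_series_mult: "Y_series * (1 + fps_X) = fps_X"
proof -
  have "inverse (1 + fps_X) * (1 + fps_X) = (1 :: real fps)" by (rule inverse_mult_eq_1) simp
  then show ?thesis unfolding Y_series_def by (metis mult.assoc mult.right_neutral)
qed

lemma Y_series_compose_Z_series: "Y_series oo Z_series = fps_X"
proof -
  have z0: "Z_series $ 0 = 0" by (simp add: Z_series_def)
  have "(Y_series * (1 + fps_X)) oo Z_series = fps_X oo Z_series" by (simp add: Y_series_mult)
  then have "(Y_series oo Z_series) * (1 + Z_series) = Z_series"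
    by (simp add: fps_compose_mult_distrib[OF z0] fps_compose_add_distrib z0)
  then have "(Y_series oo Z_series) * (1 + Z_series) * (1 - fps_X) = Z_series * (1 - fps_X)" by simp
  moreover have "(1 + Z_series) * (1 - fps_X) = 1" using Z_series_mult by (simp add: algebra_simps)
  ultimately show ?thesis using Z_series_mult by (simp add: mult.assoc)
qed

lemma sum_compositions_length:
  fixes g :: "nat \<Rightarrow> real"
  shows "(\<Sum>c\<in>compositions a. g (length c)) = (\<Sum>r\<le>a. g r * (Z_series ^ r) $ a)"
proof -
  have gr: "(\<Sum>c\<in>{c\<in>compositions a. length c = r}. g (length c)) = (\<Sum>c\<in>compositions a. g r * (if length c = r then 1 else 0))" for r
  proof -
    have "(\<Sum>c\<in>compositions a. g r * (if length c = r then 1 else 0)) = (\<Sum>c\<in>compositions a. if length c = r then g r else 0)"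
      by (intro sum.cong) auto
    also have "\<dots> = (\<Sum>c\<in>{c\<in>compositions a. length c = r}. g r)" by (rule sum.inter_filter[OF finite_compositions, symmetric])
    also have "\<dots> = (\<Sum>c\<in>{c\<in>compositions a. length c = r}. g (length c))" by (intro sum.cong) auto
    finally show ?thesis by simp
  qed
  have "(\<Sum>c\<in>compositions a. g (length c)) = (\<Sum>r\<le>a. \<Sum>c\<in>{c\<in>compositions a. length c = r}. g (length c))"
    using finite_compositions length_le_sum_list unfolding compositions_def
    by (intro sum.group[symmetric]) auto
  also have "\<dots> = (\<Sum>r\<le>a. \<Sum>c\<in>compositions a. g r * (if length c = r then 1 else 0))"
    using gr by simp
  also have "\<dots> = (\<Sum>r\<le>a. g r * (Z_series ^ r) $ a)"
    by (simp add: sum_distrib_left[symmetric] count_compositions_length)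
  finally show ?thesis .
qed

text \<open>With Y = y/(1+y) and Z = x/(1-x) we have l_r(t) = \<Sum>_j t^j/j! [y^r] Y^j, and [x^a] Z^r counts the
  compositions of a into r parts, so the identity below amounts to Y \<circ> Z = x.\<close>

lemma sum_compositions_lpoly: "(\<Sum>c\<in>compositions a. lpoly (length c)) = monom (1 / fact a) a"
proof (rule poly_eqI)
  fix j
  have "coeff (\<Sum>c\<in>compositions a. lpoly (length c)) j = (\<Sum>r\<le>a. (Y_series ^ j) $ r / fact j * (Z_series ^ r) $ a)"
    unfolding coeff_sum coeff_lpoly by (rule sum_compositions_length)
  also have "\<dots> = ((Y_series ^ j) oo Z_series) $ a / fact j"
    by (simp add: fps_compose_nth atLeast0AtMost sum_divide_distrib algebra_simps)
  also have "(Y_series ^ j) oo Z_series = fps_X ^ j"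
    using fps_compose_power[of Z_series Y_series j] Y_series_compose_Z_series by (simp add: Z_series_def)
  finally show "coeff (\<Sum>c\<in>compositions a. lpoly (length c)) j = coeff (monom (1 / fact a) a) j"
    by (auto simp: coeff_monom)
qed

lemma Tmap_sum:
  assumes "finite C"
  shows "Tmap (\<Sum>c\<in>C. fps_X ^ f c) = (\<Sum>c\<in>C. lpoly (f c))"
proof -
  let ?p = "(\<Sum>c\<in>C. fps_X ^ f c) :: real fps"
  have nth: "?p $ r = (\<Sum>c\<in>C. if f c = r then 1 else 0)" for r
    by (simp add: fps_sum_nth eq_commute)
  have sub: "{r. ?p $ r \<noteq> 0} \<subseteq> f ` C"
  proof
    fix r assume "r \<in> {r. ?p $ r \<noteq> 0}"
    then have "(\<Sum>c\<in>C. if f c = r then 1 else 0 :: real) \<noteq> 0" using nth by simp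
    moreover have "(\<Sum>c\<in>C. if f c = r then 1 else 0 :: real) = 0" if "r \<notin> f ` C"
      using that by (intro sum.neutral) auto
    ultimately show "r \<in> f ` C" by blast
  qed
  have "Tmap ?p = (\<Sum>r\<in>f ` C. smult (?p $ r) (lpoly r))"
    unfolding Tmap_def using sub assms by (intro sum.mono_neutral_left) auto
  also have "\<dots> = (\<Sum>r\<in>f ` C. \<Sum>c\<in>C. if f c = r then lpoly r else 0)"
    unfolding nth smult_sum by (intro sum.cong refl) auto
  also have "\<dots> = (\<Sum>c\<in>C. \<Sum>r\<in>f ` C. if f c = r then lpoly r else 0)"
    by (rule sum.swap)
  also have "\<dots> = (\<Sum>c\<in>C. lpoly (f c))"
    using assms by (intro sum.cong refl) (simp add: sum.delta' eq_commute)
  finally show ?thesis .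
qed

section \<open>The generating function G_tau\<close>

definition fit_poly :: "nat list \<Rightarrow> nat \<Rightarrow> nat \<Rightarrow> real fps" where
  "fit_poly ms h a = (\<Sum>c\<in>compositions a. if blocks_fit ms h c then fps_X ^ length c else 0)"

lemma fit_poly_Nil: "fit_poly [] h a = (\<Sum>c\<in>compositions a. fps_X ^ length c)"
  unfolding fit_poly_def by simp

lemma fit_poly_Nil_0: "fit_poly [] h 0 = 1"
  by (simp add: fit_poly_Nil compositions_0)

lemma fit_poly_Nil_Suc: "fit_poly [] h (Suc a) = fps_X * (\<Sum>i\<le>a. fit_poly [] h (a - i))"
proof -
  have "fit_poly [] h (Suc a) = fps_X * (\<Sum>s=1..Suc a. fit_poly [] h (Suc a - s))"
    unfolding fit_poly_Nil by (subst sum_compositions) (simp add: sum_distrib_left del: sum.cl_ivl_Suc)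
  also have "(\<Sum>s=1..Suc a. fit_poly [] h (Suc a - s)) = (\<Sum>i\<le>a. fit_poly [] h (a - i))"
    using sum.shift_bounds_cl_Suc_ivl[of "\<lambda>s. fit_poly [] h (Suc a - s)" 0 a]
    by (simp add: atLeast0AtMost del: sum.cl_ivl_Suc)
  finally show ?thesis .
qed

lemma fit_poly_Cons:
  assumes "0 < m"
  shows "fit_poly (m # ms) h a = (if m \<le> h then fit_poly ms (h - m) a
     else if a = 0 then 0 else (\<Sum>s\<in>{1..a}. fps_X * fit_poly (m # ms) s (a - s)))"
proof (cases "m \<le> h \<or> a = 0")
  case True
  then show ?thesis using assms unfolding fit_poly_def by (auto simp: compositions_0)
next
  case False
  then have "fit_poly (m # ms) h a = (\<Sum>s\<in>{1..a}. \<Sum>c\<in>compositions (a - s).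
      if blocks_fit (m # ms) h (s # c) then fps_X ^ length (s # c) else 0)"
    unfolding fit_poly_def by (subst sum_compositions) (simp del: blocks_fit.simps)
  also have "\<dots> = (\<Sum>s\<in>{1..a}. fps_X * fit_poly (m # ms) s (a - s))"
    using False unfolding fit_poly_def sum_distrib_left by (intro sum.cong refl) simp
  finally show ?thesis using False by simp
qed

lemma fit_poly_Cons_short:
  assumes "0 < m" "h < m"
  shows "fit_poly (m # ms) h a = fit_poly (m # ms) 0 a"
  using fit_poly_Cons[OF assms(1), of ms h a] fit_poly_Cons[OF assms(1), of ms 0 a] assms by simp

abbreviation x_var :: "real fps fps" where "x_var \<equiv> fps_X"
abbreviation u_var :: "real fps fps" where "u_var \<equiv> fps_const fps_X"

definition match_gf :: "nat list \<Rightarrow> real fps fps" where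
  "match_gf ms = Abs_fps (\<lambda>a. fit_poly ms 0 a)"

text \<open>Here the exponent of x also counts the length h of a leading partial run.\<close>

definition prefix_match_gf :: "nat list \<Rightarrow> real fps fps" where
  "prefix_match_gf ms = Abs_fps (\<lambda>a. \<Sum>h\<le>a. fit_poly ms h (a - h))"

definition geom_trunc :: "nat \<Rightarrow> real fps fps" where
  "geom_trunc m = Abs_fps (\<lambda>i. if i < m then 1 else 0)"

definition geom :: "real fps fps" where
  "geom = Abs_fps (\<lambda>i. 1)"

lemma geom_trunc_mult: "geom_trunc m * (1 - x_var) = 1 - x_var ^ m"
proof (rule fps_ext)
  fix n
  have "geom_trunc m * (1 - x_var) = geom_trunc m - x_var * geom_trunc m" by (simp add: algebra_simps)
  then show "(geom_trunc m * (1 - x_var)) $ n = (1 - x_var ^ m) $ n"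
    by (cases n) (auto simp: geom_trunc_def)
qed

lemma geom_mult: "geom * (1 - x_var) = 1"
proof (rule fps_ext)
  fix n
  have "geom * (1 - x_var) = geom - x_var * geom" by (simp add: algebra_simps)
  then show "(geom * (1 - x_var)) $ n = 1 $ n"
    by (cases n) (auto simp: geom_def)
qed

lemma match_gf_Cons:
  assumes "0 < m"
  shows "match_gf (m # ms) = u_var * (prefix_match_gf (m # ms) - match_gf (m # ms))"
proof (rule fps_ext)
  fix a
  have split0: "(\<Sum>h\<le>a. f h) = f 0 + (\<Sum>h\<in>{1..a}. f h)" for f :: "nat \<Rightarrow> real fps"
    by (simp add: atMost_atLeast0 sum.atLeast_Suc_atMost)
  show "match_gf (m # ms) $ a = (u_var * (prefix_match_gf (m # ms) - match_gf (m # ms))) $ a"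
    using fit_poly_Cons[OF assms, of ms 0 a] assms
    unfolding match_gf_def prefix_match_gf_def by (simp add: split0 sum_distrib_left)
qed

lemma prefix_match_gf_Cons:
  assumes "0 < m"
  shows "prefix_match_gf (m # ms) = x_var ^ m * prefix_match_gf ms + geom_trunc m * match_gf (m # ms)"
proof (rule fps_ext)
  fix a
  have "prefix_match_gf (m # ms) $ a
      = (\<Sum>h\<le>a. if m \<le> h then fit_poly ms (h - m) (a - h) else 0)
        + (\<Sum>h\<le>a. if m \<le> h then 0 else fit_poly (m # ms) 0 (a - h))"
    unfolding prefix_match_gf_def fps_nth_Abs_fps sum.distrib[symmetric]
    using fit_poly_Cons[OF assms] fit_poly_Cons_short[OF assms] by (intro sum.cong) auto
  also have "(\<Sum>h\<le>a. if m \<le> h then fit_poly ms (h - m) (a - h) else 0) = (x_var ^ m * prefix_match_gf ms) $ a"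
  proof (cases "m \<le> a")
    case True
    have "(\<Sum>h\<le>a. if m \<le> h then fit_poly ms (h - m) (a - h) else 0) = (\<Sum>h=m..a. fit_poly ms (h - m) (a - h))"
      by (subst sum.inter_filter[symmetric]) (auto intro!: sum.cong)
    also have "\<dots> = (\<Sum>h=0..a - m. fit_poly ms h (a - m - h))"
      using sum.shift_bounds_cl_nat_ivl[of "\<lambda>h. fit_poly ms (h - m) (a - h)" 0 m "a - m"] True
      by (simp add: add.commute)
    finally show ?thesis using True by (simp add: fps_X_power_mult_nth prefix_match_gf_def atLeast0AtMost)
  qed (simp add: fps_X_power_mult_nth)
  also have "(\<Sum>h\<le>a. if m \<le> h then 0 else fit_poly (m # ms) 0 (a - h)) = (geom_trunc m * match_gf (m # ms)) $ a"
    unfolding fps_mult_nth geom_trunc_def match_gf_def by (simp add: atLeast0AtMost) (intro sum.cong; simp)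
  finally show "prefix_match_gf (m # ms) $ a = (x_var ^ m * prefix_match_gf ms + geom_trunc m * match_gf (m # ms)) $ a"
    by simp
qed

lemma prefix_match_gf_Nil: "prefix_match_gf [] * (1 - x_var - u_var * x_var) = 1"
proof -
  define A where "A = Abs_fps (\<lambda>a. fit_poly [] 0 a)"
  have geom_A: "(geom * A) $ a = (\<Sum>i\<le>a. fit_poly [] 0 (a - i))" for a
    unfolding fps_mult_nth geom_def A_def by (simp add: atLeast0AtMost)
  have F: "prefix_match_gf [] = geom * A"
    by (rule fps_ext) (simp add: geom_A prefix_match_gf_def fit_poly_Nil)
  have A_eq: "A = 1 + u_var * (x_var * (geom * A))"
  proof (rule fps_ext)
    fix a
    show "A $ a = (1 + u_var * (x_var * (geom * A))) $ a"
    proof (cases a)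
      case (Suc b)
      have "A $ Suc b = fit_poly [] 0 (Suc b)" unfolding A_def by simp
      also have "\<dots> = fps_X * (geom * A) $ b" by (simp add: fit_poly_Nil_Suc geom_A)
      finally show ?thesis unfolding Suc by simp
    qed (simp add: A_def fit_poly_Nil_0)
  qed
  have "prefix_match_gf [] * (1 - x_var - u_var * x_var)
      = (geom * (1 - x_var)) * A - u_var * (x_var * (geom * A))"
    unfolding F by (simp add: algebra_simps)
  also have "\<dots> = 1" using A_eq geom_mult by (metis add_diff_cancel_right' mult_1)
  finally show ?thesis .
qed

lemma fps_mult_inverse_eq_1: "(f :: real fps fps) $ 0 = 1 \<Longrightarrow> f * inverse f = 1"
  using fps_right_inverse[of f 1] by (simp add: fps_inverse_def fps_lr_inverse_one_one)

definition den :: "nat \<Rightarrow> real fps fps" where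
  "den m = 1 - x_var - u_var * (x_var - x_var ^ m)"

definition den_inf :: "real fps fps" where
  "den_inf = 1 - x_var - u_var * x_var"

lemma den_inverse: "0 < m \<Longrightarrow> den m * inverse (den m) = 1"
  by (rule fps_mult_inverse_eq_1) (simp add: den_def fps_X_power_iff)

lemma den_inf_inverse: "den_inf * inverse den_inf = 1"
  by (rule fps_mult_inverse_eq_1) (simp add: den_inf_def)

lemma prefix_match_gf_Cons_den:
  assumes "0 < m"
  shows "prefix_match_gf (m # ms) * den m = x_var ^ m * (1 - x_var) * (1 + u_var) * prefix_match_gf ms"
proof -
  let ?F = "prefix_match_gf (m # ms)" and ?K = "match_gf (m # ms)" and ?F' = "prefix_match_gf ms"
  have K: "?K * (1 + u_var) = u_var * ?F" using match_gf_Cons[OF assms, of ms] by (simp add: algebra_simps)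
  have "?F * ((1 - x_var) * (1 + u_var))
      = x_var ^ m * ?F' * ((1 - x_var) * (1 + u_var)) + (geom_trunc m * (1 - x_var)) * (?K * (1 + u_var))"
    by (subst prefix_match_gf_Cons[OF assms]) (simp add: algebra_simps)
  also have "\<dots> = x_var ^ m * ?F' * ((1 - x_var) * (1 + u_var)) + (1 - x_var ^ m) * (u_var * ?F)"
    by (simp add: geom_trunc_mult K)
  finally show ?thesis unfolding den_def by (simp add: algebra_simps)
qed

definition block_factor :: "nat \<Rightarrow> real fps fps" where
  "block_factor m = x_var ^ m * (1 - x_var) * (1 + u_var) * inverse (den m)"

lemma prefix_match_gf_eq_prod: "0 \<notin> set ms \<Longrightarrow> prefix_match_gf ms = prod_list (map block_factor ms) * inverse den_inf"
proof (induction ms)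
  case Nil
  have "prefix_match_gf [] = (prefix_match_gf [] * den_inf) * inverse den_inf"
    using den_inf_inverse by (simp add: mult.assoc)
  then show ?case using prefix_match_gf_Nil unfolding den_inf_def by simp
next
  case (Cons m ms)
  then have m: "0 < m" "0 \<notin> set ms" by auto
  have "prefix_match_gf (m # ms) = (prefix_match_gf (m # ms) * den m) * inverse (den m)"
    using den_inverse[OF m(1)] by (simp add: mult.assoc)
  also have "\<dots> = block_factor m * prefix_match_gf ms"
    unfolding prefix_match_gf_Cons_den[OF m(1)] block_factor_def by (simp add: algebra_simps)
  finally show ?case using Cons.IH[OF m(2)] by (simp add: mult.assoc)
qed

lemma match_gf_Cons_eq:
  assumes "0 < m"
  shows "match_gf (m # ms) = u_var * x_var ^ m * (1 - x_var) * inverse (den m) * prefix_match_gf ms"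
proof -
  have "1 + u_var \<noteq> 0"
  proof
    assume "1 + u_var = 0"
    then have "(1 + u_var) $ 0 $ 0 = 0" by simp
    then show False by simp
  qed
  moreover have "match_gf (m # ms) * (1 + u_var) = u_var * prefix_match_gf (m # ms)"
    using match_gf_Cons[OF assms, of ms] by (simp add: algebra_simps)
  moreover have "prefix_match_gf (m # ms) = x_var ^ m * (1 - x_var) * (1 + u_var) * prefix_match_gf ms * inverse (den m)"
    using prefix_match_gf_Cons_den[OF assms, of ms, symmetric] den_inverse[OF assms]
    by (metis mult.assoc mult.right_neutral)
  ultimately show ?thesis by (simp add: ac_simps)
qed

lemma Gtau_factor_eq_block_factor: "0 < m \<Longrightarrow> x_var ^ m + u_var * x_var ^ m * (1 - x_var ^ m) * inverse (den m) = block_factor m"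
proof -
  assume m: "0 < m"
  have "x_var ^ m + u_var * x_var ^ m * (1 - x_var ^ m) * inverse (den m)
      = (x_var ^ m * den m + u_var * x_var ^ m * (1 - x_var ^ m)) * inverse (den m)"
    using den_inverse[OF m] by (simp add: algebra_simps)
  also have "x_var ^ m * den m + u_var * x_var ^ m * (1 - x_var ^ m) = x_var ^ m * (1 - x_var) * (1 + u_var)"
    unfolding den_def by (simp add: algebra_simps)
  finally show ?thesis unfolding block_factor_def by simp
qed

lemma Gtau_eq_match_gf:
  assumes "0 \<notin> set ms" "ms \<noteq> []"
  shows "Gtau ms = match_gf ms"
proof -
  obtain m ms' where ms: "ms = m # ms'" using assms(2) by (cases ms) auto
  have m: "0 < m" "0 \<notin> set ms'" using assms(1) ms by auto
  have "prod_list (map (\<lambda>m. x_var ^ m + u_var * x_var ^ m * (1 - x_var ^ m)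
        * inverse (1 - x_var - u_var * (x_var - x_var ^ m))) ms')
      = prod_list (map block_factor ms')"
    using Gtau_factor_eq_block_factor m(2) unfolding den_def
    by (intro arg_cong[where f=prod_list] map_cong refl) (metis gr0I)
  then have "Gtau ms = u_var * x_var ^ m * (1 - x_var) * inverse (den m) * inverse den_inf
      * prod_list (map block_factor ms')"
    unfolding Gtau_def Let_def ms den_def den_inf_def by simp
  also have "\<dots> = match_gf ms"
    unfolding ms match_gf_Cons_eq[OF m(1)] prefix_match_gf_eq_prod[OF m(2)] by (simp add: ac_simps)
  finally show ?thesis .
qed

lemma factor_coeff_eq_sum_avoiding:
  assumes "0 \<notin> set ms" "ms \<noteq> []"
  shows "factor_coeff ms a = (\<Sum>c\<in>{c\<in>compositions a. \<not> blocks_fit ms 0 c}. lpoly (length c))"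
proof -
  let ?fit = "{c. blocks_fit ms 0 c}"
  have "Gtau ms $ a = (\<Sum>c\<in>{c\<in>compositions a. blocks_fit ms 0 c}. fps_X ^ length c)"
    using Gtau_eq_match_gf[OF assms]
    unfolding match_gf_def fit_poly_def by (simp add: sum.inter_filter[OF finite_compositions])
  also have "{c\<in>compositions a. blocks_fit ms 0 c} = compositions a \<inter> ?fit" by blast
  finally have "Tmap (Gtau ms $ a) = (\<Sum>c\<in>compositions a \<inter> ?fit. lpoly (length c))"
    by (simp add: Tmap_sum finite_compositions)
  moreover have "monom (1 / fact a) a = (\<Sum>c\<in>compositions a \<inter> ?fit. lpoly (length c))
      + (\<Sum>c\<in>compositions a - ?fit. lpoly (length c))"
    unfolding sum_compositions_lpoly[symmetric] by (rule sum.Int_Diff[OF finite_compositions])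
  moreover have "compositions a - ?fit = {c\<in>compositions a. \<not> blocks_fit ms 0 c}" by blast
  ultimately show ?thesis unfolding factor_coeff_def by simp
qed

section \<open>Smirnov words and the main theorem\<close>

lemma sum_Phi_prod_lpoly_compositions:
  assumes "finite I"
  shows "(\<Sum>f\<in>PiE I (\<lambda>i. compositions (a i)). Phi (\<Prod>i\<in>I. lpoly (length (f i))))
     = real (card {w. set w \<subseteq> I \<and> (\<forall>i\<in>I. count_list w i = a i)})"
proof -
  have "(\<Sum>f\<in>PiE I (\<lambda>i. compositions (a i)). Phi (\<Prod>i\<in>I. lpoly (length (f i))))
      = Phi (\<Prod>i\<in>I. \<Sum>c\<in>compositions (a i). lpoly (length c))"
    unfolding Phi_sum[symmetric] using assms finite_compositions by (subst prod_sum_PiE) simp_all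
  also have "\<dots> = Phi (monom (\<Prod>i\<in>I. 1 / fact (a i)) (\<Sum>i\<in>I. a i))"
    by (simp add: sum_compositions_lpoly prod_monom)
  also have "\<dots> = fact (\<Sum>i\<in>I. a i) / (\<Prod>i\<in>I. fact (a i))"
    by (simp add: Phi_monom prod_dividef)
  finally show ?thesis by (simp add: card_words_with_counts[OF assms])
qed

lemma sum_card_smirnov_words_compositions:
  assumes "finite I"
  shows "(\<Sum>f\<in>PiE I (\<lambda>i. compositions (a i)). real (card (smirnov_words I (\<lambda>i. length (f i)))))
     = real (card {w. set w \<subseteq> I \<and> (\<forall>i\<in>I. count_list w i = a i)})"
proof -
  have "card {w. set w \<subseteq> I \<and> (\<forall>i\<in>I. count_list w i = a i)}
      = (\<Sum>f\<in>PiE I (\<lambda>i. compositions (a i)). card (words_with_runs I f))"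
    using card_words_by_letter_runs[OF assms, of "\<lambda>_ _. True" a] by simp
  also have "\<dots> = (\<Sum>f\<in>PiE I (\<lambda>i. compositions (a i)). card (smirnov_words I (\<lambda>i. length (f i))))"
    by (intro sum.cong refl card_words_with_runs) (auto simp: compositions_def)
  finally show ?thesis by simp
qed

lemma composition_length_eq_sum_list: "0 \<notin> set c \<Longrightarrow> length c = sum_list c \<Longrightarrow> c = replicate (length c) 1"
proof (induction c)
  case (Cons x c)
  have "length c \<le> sum_list c" using Cons.prems length_le_sum_list by simp
  then have "x = 1" "length c = sum_list c" using Cons.prems by auto
  then show ?case using Cons by simp
qed simp

lemma sum_length_compositions_less:
  assumes "finite I" and f: "f \<in> PiE I (\<lambda>i. compositions (r i))"
    and ne: "f \<noteq> restrict (\<lambda>i. replicate (r i) 1) I"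
  shows "(\<Sum>i\<in>I. length (f i)) < (\<Sum>i\<in>I. r i)"
proof -
  have ones: "restrict (\<lambda>i. replicate (r i) 1) I \<in> PiE I (\<lambda>i. compositions (r i))"
    unfolding compositions_def by (auto simp: sum_list_replicate)
  have le: "length (f i) \<le> r i" if "i \<in> I" for i
  proof -
    have "f i \<in> compositions (r i)" using f that by auto
    then show ?thesis using length_le_sum_list[of "f i"] unfolding compositions_def by auto
  qed
  moreover have "\<exists>i\<in>I. length (f i) < r i"
  proof (rule ccontr)
    assume "\<not> (\<exists>i\<in>I. length (f i) < r i)"
    then have "f i = replicate (r i) 1" if "i \<in> I" for i
    proof -
      have "length (f i) = r i" using le[OF that] that \<open>\<not> (\<exists>i\<in>I. length (f i) < r i)\<close> by fastforce
      moreover have "f i \<in> compositions (r i)" using f that by auto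
      ultimately show ?thesis
        using composition_length_eq_sum_list[of "f i"] unfolding compositions_def by auto
    qed
    then have "f = restrict (\<lambda>i. replicate (r i) 1) I" by (intro PiE_ext[OF f ones]) simp
    then show False using ne by contradiction
  qed
  ultimately show ?thesis using assms(1) by (intro sum_strict_mono_ex1) auto
qed

text \<open>Both sides below satisfy the same triangular system of equations, obtained by summing over
  all ways of refining each letter count into a composition: the refinement into parts 1 is the
  unique term of maximal total length.\<close>

lemma Phi_prod_lpoly_eq_card_smirnov_words:
  assumes "finite I"
  shows "Phi (\<Prod>i\<in>I. lpoly (r i)) = real (card (smirnov_words I r))"
proof (induction "\<Sum>i\<in>I. r i" arbitrary: r rule: less_induct)
  case less
  let ?C = "PiE I (\<lambda>i. compositions (r i))"
  let ?L = "\<lambda>f. Phi (\<Prod>i\<in>I. lpoly (length (f i)))"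
  let ?S = "\<lambda>f. real (card (smirnov_words I (\<lambda>i. length (f i))))"
  define ones where "ones = restrict (\<lambda>i. replicate (r i) (1::nat)) I"
  have ones: "ones \<in> ?C" unfolding ones_def compositions_def by (auto simp: sum_list_replicate)
  have fin: "finite ?C" using assms finite_compositions by (intro finite_PiE) simp_all
  have "?L ones + (\<Sum>f\<in>?C - {ones}. ?L f) = ?S ones + (\<Sum>f\<in>?C - {ones}. ?S f)"
    using sum_Phi_prod_lpoly_compositions[OF assms, of r] sum_card_smirnov_words_compositions[OF assms, of r]
    by (simp add: sum.remove[OF fin ones])
  moreover have "(\<Sum>f\<in>?C - {ones}. ?L f) = (\<Sum>f\<in>?C - {ones}. ?S f)"
    using less.hyps sum_length_compositions_less[OF assms] unfolding ones_def by (intro sum.cong) auto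
  moreover have "?L ones = Phi (\<Prod>i\<in>I. lpoly (r i))"
    unfolding ones_def by (intro arg_cong[where f = Phi] prod.cong) simp_all
  moreover have "?S ones = real (card (smirnov_words I r))"
    unfolding ones_def smirnov_words_def by (metis (no_types, lifting) length_replicate restrict_apply')
  ultimately show ?case by simp
qed

lemma card_words_by_letter_runs_eq_Phi:
  assumes "finite I"
  shows "real (card {w. set w \<subseteq> I \<and> (\<forall>i\<in>I. Q i (letter_runs i w)) \<and> (\<forall>i\<in>I. count_list w i = \<alpha> i)})
    = Phi (\<Prod>i\<in>I. \<Sum>c\<in>{r\<in>compositions (\<alpha> i). Q i r}. lpoly (length c))"
proof -
  let ?C = "PiE I (\<lambda>i. {r\<in>compositions (\<alpha> i). Q i r})"
  have "real (card {w. set w \<subseteq> I \<and> (\<forall>i\<in>I. Q i (letter_runs i w)) \<and> (\<forall>i\<in>I. count_list w i = \<alpha> i)})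
      = (\<Sum>f\<in>?C. real (card (smirnov_words I (\<lambda>i. length (f i)))))"
    unfolding card_words_by_letter_runs[OF assms] of_nat_sum
  proof (intro sum.cong refl)
    fix f assume "f \<in> ?C"
    then have "\<forall>i\<in>I. 0 \<notin> set (f i)" unfolding compositions_def by auto
    then show "real (card (words_with_runs I f)) = real (card (smirnov_words I (\<lambda>i. length (f i))))"
      by (simp add: card_words_with_runs)
  qed
  also have "\<dots> = Phi (\<Sum>f\<in>?C. \<Prod>i\<in>I. lpoly (length (f i)))"
    by (simp add: Phi_sum Phi_prod_lpoly_eq_card_smirnov_words[OF assms])
  also have "\<dots> = Phi (\<Prod>i\<in>I. \<Sum>c\<in>{r\<in>compositions (\<alpha> i). Q i r}. lpoly (length c))"
    using assms finite_compositions by (subst prod_sum_PiE) simp_all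
  finally show ?thesis .
qed

lemma letter_runs_notin: "i \<notin> set w \<Longrightarrow> letter_runs i w = []"
  by (induction w) (auto simp: letter_runs_def)

lemma not_contains_vinc_iff_letter_runs:
  assumes "0 \<notin> set ms" "ms \<noteq> []" "set w \<subseteq> I"
  shows "\<not> contains_vinc ms w \<longleftrightarrow> (\<forall>i\<in>I. \<not> blocks_fit ms 0 (letter_runs i w))"
proof -
  have "\<not> blocks_fit ms 0 (letter_runs i w)" if "i \<notin> I" for i
  proof -
    have "letter_runs i w = []" using assms(3) that by (intro letter_runs_notin) blast
    then show ?thesis using assms(1,2) by (cases ms) auto
  qed
  then show ?thesis using contains_vinc_iff_blocks_fit[OF assms(1,2)] by blast
qed

theorem theorem4p1:
  fixes k :: nat and ms :: "nat list" and \<alpha> :: "nat \<Rightarrow> nat"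
  assumes "1 \<le> k" and "ms \<noteq> []" and "\<forall>m\<in>set ms. 1 \<le> m"
  shows "real (card {w. set w \<subseteq> {1..k} \<and> \<not> contains_vinc ms w \<and>
                        (\<forall>i\<in>{1..k}. count_list w i = \<alpha> i)})
         = Phi (\<Prod>i\<in>{1..k}. factor_coeff ms (\<alpha> i))"
proof -
  have ms: "0 \<notin> set ms" using assms(3) by force
  have "{w. set w \<subseteq> {1..k} \<and> \<not> contains_vinc ms w \<and> (\<forall>i\<in>{1..k}. count_list w i = \<alpha> i)}
      = {w. set w \<subseteq> {1..k} \<and> (\<forall>i\<in>{1..k}. \<not> blocks_fit ms 0 (letter_runs i w))
            \<and> (\<forall>i\<in>{1..k}. count_list w i = \<alpha> i)}"
    using not_contains_vinc_iff_letter_runs[OF ms assms(2)] by blast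
  also have "real (card \<dots>)
      = Phi (\<Prod>i\<in>{1..k}. \<Sum>c\<in>{c\<in>compositions (\<alpha> i). \<not> blocks_fit ms 0 c}. lpoly (length c))"
    by (rule card_words_by_letter_runs_eq_Phi) simp
  also have "\<dots> = Phi (\<Prod>i\<in>{1..k}. factor_coeff ms (\<alpha> i))"
    using factor_coeff_eq_sum_avoiding[OF ms assms(2)] by simp
  finally show ?thesis .
qed

end
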